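(* Let $r,s\in\widetilde{\mathbb{K}}_{sm}$. The following are equivalent: (i) $rs=0$; (ii) there exists $x\in\widetilde{\mathbb{K}}_{sm}$ such that $rx=0$ and $s(1-x)=0$; (iii) $\mathrm{Ann}(r)+\mathrm{Ann}(s)=\widetilde{\mathbb{K}}_{sm}$; (iv) $|r|\wedge|s|=0$.
   Context: Let $I=(0,1]$ and $\mathbb{K}\in\{\mathbb{R},\mathbb{C}\}$. $\widetilde{\mathbb{K}}_{sm}=\mathcal{E}_{M,sm}/\mathcal{N}_{sm}$ where $\mathcal{E}_{M,sm}$ is the set of nets $(r_\varepsilon)_{\varepsilon\in I}\in\mathbb{K}^I$ smooth in $\varepsilon$ with $|r_\varepsilon|=O(\varepsilon^{-N})$ for some $N$, and $\mathcal{N}_{sm}$ those with $|r_\varepsilon|=O(\varepsilon^m)$ for all $m$; $\widetilde{\mathbb{K}}_{co}$, $\mathcal{N}_{co}$ are defined analogously with continuous nets, and $\tau_{sm}:\widetilde{\mathbb{K}}_{sm}\to\widetilde{\mathbb{K}}_{co}$, $[(r_\varepsilon)]\mapsto[(r_\varepsilon)]$, is a ring isomorphism. For $r=[(r_\varepsilon)_\varepsilon]$, $|r|:=\tau_{sm}^{-1}([(|r_\varepsilon|)_\varepsilon])\in\widetilde{\mathbb{R}}_{sm}\subseteq\widetilde{\mathbb{K}}_{sm}$. For $a,b\in\widetilde{\mathbb{R}}_{sm}$, $a\wedge b=\tau_{sm}^{-1}([(\min(a_\varepsilon,b_\varepsilon))_\varepsilon])$. $\mathrm{Ann}(r)=\{t\in\widetilde{\mathbb{K}}_{sm}: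 rt=0\}$. *)

theory Defs
  imports "HOL-Analysis.Analysis" "HOL-Algebra.QuotRing"
begin

text \<open>Nets are functions real to K; only their values on I = (0,1] matter.\<close>

abbreviation Iset :: "real set" where "Iset \<equiv> {0<..1}"

definition smooth_net :: "(real \<Rightarrow> 'a::real_normed_vector) \<Rightarrow> bool" where
  "smooth_net f \<longleftrightarrow> (\<exists>D :: nat \<Rightarrow> real \<Rightarrow> 'a.
      (\<forall>e\<in>Iset. D 0 e = f e) \<and>
      (\<forall>n. \<forall>e\<in>Iset. (D n has_vector_derivative D (Suc n) e) (at e within Iset)))"

definition cont_net :: "(real \<Rightarrow> 'a::real_normed_vector) \<Rightarrow> bool" where
  "cont_net f \<longleftrightarrow> continuous_on Iset f"

definition moderate :: "(real \<Rightarrow> 'a::real_normed_vector) \<Rightarrow> bool" where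
  "moderate f \<longleftrightarrow> (\<exists>N::nat. \<exists>C e0. e0 > 0 \<and>
      (\<forall>e\<in>{0<..min e0 1}. norm (f e) \<le> C / e ^ N))"

definition negligible :: "(real \<Rightarrow> 'a::real_normed_vector) \<Rightarrow> bool" where
  "negligible f \<longleftrightarrow> (\<forall>m::nat. \<exists>C e0. e0 > 0 \<and>
      (\<forall>e\<in>{0<..min e0 1}. norm (f e) \<le> C * e ^ m))"

definition net_ring :: "(real \<Rightarrow> 'a::real_normed_field) set \<Rightarrow> (real \<Rightarrow> 'a) ring" where
  "net_ring A = \<lparr>carrier = A, monoid.mult = (\<lambda>f g e. f e * g e), one = (\<lambda>_. 1),
                  zero = (\<lambda>_. 0), add = (\<lambda>f g e. f e + g e)\<rparr>"

definition EM_sm :: "(real \<Rightarrow> 'a::real_normed_field) set" where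
  "EM_sm = {f. smooth_net f \<and> moderate f}"
definition N_sm :: "(real \<Rightarrow> 'a::real_normed_field) set" where
  "N_sm = {f. smooth_net f \<and> negligible f}"
definition EM_co :: "(real \<Rightarrow> 'a::real_normed_field) set" where
  "EM_co = {f. cont_net f \<and> moderate f}"
definition N_co :: "(real \<Rightarrow> 'a::real_normed_field) set" where
  "N_co = {f. cont_net f \<and> negligible f}"

definition Ksm :: "(real \<Rightarrow> 'a::real_normed_field) set ring" where
  "Ksm = net_ring EM_sm Quot N_sm"
definition Kco :: "(real \<Rightarrow> 'a::real_normed_field) set ring" where
  "Kco = net_ring EM_co Quot N_co"

definition co_class :: "(real \<Rightarrow> 'a::real_normed_field) \<Rightarrow> (real \<Rightarrow> 'a) set" where
  "co_class f = a_r_coset (net_ring EM_co) N_co f"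

definition tau_sm :: "(real \<Rightarrow> 'a::real_normed_field) set \<Rightarrow> (real \<Rightarrow> 'a) set" where
  "tau_sm c = co_class (SOME f. f \<in> c)"

definition gabs :: "(real \<Rightarrow> 'a::real_normed_field) set \<Rightarrow> (real \<Rightarrow> real) set" where
  "gabs r = inv_into (carrier Ksm) tau_sm
              (co_class (\<lambda>e. norm ((SOME f. f \<in> r) e)))"

definition gwedge :: "(real \<Rightarrow> real) set \<Rightarrow> (real \<Rightarrow> real) set \<Rightarrow> (real \<Rightarrow> real) set" where
  "gwedge a b = inv_into (carrier Ksm) tau_sm
              (co_class (\<lambda>e. min ((SOME f. f \<in> a) e) ((SOME f. f \<in> b) e)))"

definition Ann :: "('a, 'b) ring_scheme \<Rightarrow> 'a \<Rightarrow> 'a set" where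
  "Ann R r = {t \<in> carrier R. r \<otimes>\<^bsub>R\<^esub> t = \<zero>\<^bsub>R\<^esub>}"

end

theory Submission
  imports Defs
begin

text \<open>
  Represent \<open>r\<close> and \<open>s\<close> by moderate smooth nets \<open>p\<close> and \<open>q\<close>; then \<open>r s = 0\<close> means that \<open>p q\<close>
  is negligible, and since \<open>min(|p|,|q|)\<^sup>2 \<le> |p q| \<le> min(|p|,|q|) (|p| + |q|)\<close> this holds iff
  \<open>min(|p|,|q|)\<close> is negligible. That is (iv), because \<open>|r|\<close> and \<open>min(|r|,|s|)\<close> are represented by
  the smooth nets \<open>sqrt(|p|\<^sup>2 + E\<^sup>2)\<close> and \<open>(a + b - sqrt((a - b)\<^sup>2 + E\<^sup>2)) / 2\<close>, which differ from
  \<open>|p|\<close> and \<open>min(a,b)\<close> by at most the negligible smooth net \<open>E(\<epsilon>) = exp(-1/\<epsilon>)\<close>.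
  For (i) \<Longrightarrow> (ii), take \<open>x = |q|\<^sup>2 / (|p|\<^sup>2 + |q|\<^sup>2 + d)\<close> with \<open>d = sqrt(|p q|\<^sup>2 + E\<^sup>2)\<close>: both
  \<open>|p x|\<close> and \<open>|q (1 - x)|\<close> are at most \<open>2 sqrt d\<close>, which is negligible along with \<open>p q\<close>.
  The rest holds in every commutative ring: \<open>r s = s (r x) + r (s (1 - x))\<close>, and (ii) says
  exactly that \<open>1 \<in> Ann(r) + Ann(s)\<close>.
\<close>

section \<open>Moderate and negligible nets\<close>

lemma eventually_at_right_0_iff_Iset:
  "(\<exists>e0. e0 > 0 \<and> (\<forall>e\<in>{0<..min e0 1}. P e)) \<longleftrightarrow> (\<forall>\<^sub>F e in at_right (0::real). P e)"
  unfolding eventually_at_right_field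
proof safe
  fix e0 :: real assume "e0 > 0" "\<forall>e\<in>{0<..min e0 1}. P e"
  then show "\<exists>b>0. \<forall>y>0. y < b \<longrightarrow> P y" by (intro exI[of _ "min e0 1"]) auto
next
  fix b :: real assume "b > 0" "\<forall>y>0. y < b \<longrightarrow> P y"
  then show "\<exists>e0>0. \<forall>e\<in>{0<..min e0 1}. P e" by (intro exI[of _ "b/2"]) auto
qed

lemma negligible_iff_eventually:
  "negligible f \<longleftrightarrow> (\<forall>m::nat. \<exists>C. \<forall>\<^sub>F e in at_right 0. norm (f e) \<le> C * e ^ m)"
  unfolding negligible_def eventually_at_right_0_iff_Iset ..

lemma moderate_iff_eventually:
  "moderate f \<longleftrightarrow> (\<exists>N::nat. \<exists>C. \<forall>\<^sub>F e in at_right 0. norm (f e) \<le> C / e ^ N)"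
  unfolding moderate_def eventually_at_right_0_iff_Iset ..

lemma eventually_at_right_0_le_1: "\<forall>\<^sub>F e in at_right (0::real). e \<le> 1"
  unfolding eventually_at_right_field by (intro exI[of _ 1]) auto

lemma negligible_dominated:
  assumes "negligible f" "\<forall>\<^sub>F e in at_right 0. norm (g e) \<le> K * norm (f e)"
  shows "negligible g"
  unfolding negligible_iff_eventually
proof
  fix m
  obtain C where C: "\<forall>\<^sub>F e in at_right 0. norm (f e) \<le> C * e ^ m"
    using assms(1) negligible_iff_eventually by blast
  have "\<forall>\<^sub>F e in at_right 0. norm (g e) \<le> (\<bar>K\<bar> * C) * e ^ m"
    using C assms(2)
  proof eventually_elim
    case (elim e)
    have "norm (g e) \<le> \<bar>K\<bar> * norm (f e)" using elim(2) by (smt (verit) mult_right_mono norm_ge_zero)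
    also have "\<dots> \<le> \<bar>K\<bar> * (C * e ^ m)" using elim(1) by (simp add: mult_left_mono)
    finally show ?case by simp
  qed
  then show "\<exists>C. \<forall>\<^sub>F e in at_right 0. norm (g e) \<le> C * e ^ m" by blast
qed

lemma moderate_dominated:
  assumes "moderate f" "\<forall>\<^sub>F e in at_right 0. norm (g e) \<le> K * norm (f e)"
  shows "moderate g"
proof -
  obtain N C where C: "\<forall>\<^sub>F e in at_right 0. norm (f e) \<le> C / e ^ N"
    using assms(1) moderate_iff_eventually by blast
  have "\<forall>\<^sub>F e in at_right 0. norm (g e) \<le> (\<bar>K\<bar> * C) / e ^ N"
    using C assms(2)
  proof eventually_elim
    case (elim e)
    have "norm (g e) \<le> \<bar>K\<bar> * norm (f e)" using elim(2) by (smt (verit) mult_right_mono norm_ge_zero)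
    also have "\<dots> \<le> \<bar>K\<bar> * (C / e ^ N)" using elim(1) by (intro mult_left_mono) auto
    finally show ?case by simp
  qed
  then show ?thesis unfolding moderate_iff_eventually by blast
qed

lemma negligible_add:
  assumes "negligible f" "negligible g" shows "negligible (\<lambda>e. f e + g e)"
  unfolding negligible_iff_eventually
proof
  fix m
  obtain C D where "\<forall>\<^sub>F e in at_right 0. norm (f e) \<le> C * e ^ m"
    and "\<forall>\<^sub>F e in at_right 0. norm (g e) \<le> D * e ^ m"
    using assms negligible_iff_eventually by blast
  then have "\<forall>\<^sub>F e in at_right 0. norm (f e + g e) \<le> (C + D) * e ^ m"
    by eventually_elim (smt (verit) distrib_right norm_triangle_ineq)
  then show "\<exists>C. \<forall>\<^sub>F e in at_right 0. norm (f e + g e) \<le> C * e ^ m" by blast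
qed

lemma moderate_add:
  assumes "moderate f" "moderate g" shows "moderate (\<lambda>e. f e + g e)"
proof -
  obtain N C M D where C: "\<forall>\<^sub>F e in at_right 0. norm (f e) \<le> C / e ^ N"
    and D: "\<forall>\<^sub>F e in at_right 0. norm (g e) \<le> D / e ^ M"
    using assms moderate_iff_eventually by blast
  have "\<forall>\<^sub>F e in at_right 0. norm (f e + g e) \<le> (\<bar>C\<bar> + \<bar>D\<bar>) / e ^ (N + M)"
    using C D eventually_at_right_less eventually_at_right_0_le_1
  proof eventually_elim
    case (elim e)
    have weaken: "c / e ^ k \<le> \<bar>c\<bar> / e ^ (N + M)" if "k \<le> N + M" for c k
    proof -
      have "e ^ (N + M) \<le> e ^ k" using elim that by (simp add: power_decreasing)
      then have "\<bar>c\<bar> / e ^ k \<le> \<bar>c\<bar> / e ^ (N + M)" using elim by (intro divide_left_mono) auto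
      moreover have "c / e ^ k \<le> \<bar>c\<bar> / e ^ k" using elim by (intro divide_right_mono) auto
      ultimately show ?thesis by linarith
    qed
    have "norm (f e + g e) \<le> norm (f e) + norm (g e)" by (rule norm_triangle_ineq)
    also have "\<dots> \<le> (\<bar>C\<bar> + \<bar>D\<bar>) / e ^ (N + M)"
      using weaken[of N C] weaken[of M D] elim(1,2) by (simp add: add_divide_distrib)
    finally show ?case .
  qed
  then show ?thesis unfolding moderate_iff_eventually by blast
qed

lemma moderate_mult:
  fixes f g :: "real \<Rightarrow> 'a::real_normed_field"
  assumes "moderate f" "moderate g" shows "moderate (\<lambda>e. f e * g e)"
proof -
  obtain N C M D where C: "\<forall>\<^sub>F e in at_right 0. norm (f e) \<le> C / e ^ N"
    and D: "\<forall>\<^sub>F e in at_right 0. norm (g e) \<le> D / e ^ M"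
    using assms moderate_iff_eventually by blast
  have "\<forall>\<^sub>F e in at_right 0. norm (f e * g e) \<le> (C * D) / e ^ (N + M)"
    using C D eventually_at_right_less
  proof eventually_elim
    case (elim e)
    have "norm (f e * g e) = norm (f e) * norm (g e)" by (simp add: norm_mult)
    also have "\<dots> \<le> (C / e ^ N) * (D / e ^ M)"
      using elim by (intro mult_mono) (auto intro: order_trans[OF norm_ge_zero])
    also have "\<dots> = (C * D) / e ^ (N + M)" by (simp add: power_add)
    finally show ?case .
  qed
  then show ?thesis unfolding moderate_iff_eventually by blast
qed

lemma negligible_mult_moderate:
  fixes f g :: "real \<Rightarrow> 'a::real_normed_field"
  assumes "negligible f" "moderate g" shows "negligible (\<lambda>e. g e * f e)"
  unfolding negligible_iff_eventually
proof
  fix m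
  obtain N D where D: "\<forall>\<^sub>F e in at_right 0. norm (g e) \<le> D / e ^ N"
    using assms(2) moderate_iff_eventually by blast
  obtain C where C: "\<forall>\<^sub>F e in at_right 0. norm (f e) \<le> C * e ^ (m + N)"
    using assms(1) negligible_iff_eventually by blast
  have "\<forall>\<^sub>F e in at_right 0. norm (g e * f e) \<le> (D * C) * e ^ m"
    using C D eventually_at_right_less
  proof eventually_elim
    case (elim e)
    have "norm (g e * f e) = norm (g e) * norm (f e)" by (simp add: norm_mult)
    also have "\<dots> \<le> (D / e ^ N) * (C * e ^ (m + N))"
      using elim by (intro mult_mono) (auto intro: order_trans[OF norm_ge_zero])
    also have "\<dots> = (D * C) * e ^ m" using elim by (simp add: power_add)
    finally show ?case .
  qed
  then show "\<exists>C. \<forall>\<^sub>F e in at_right 0. norm (g e * f e) \<le> C * e ^ m" by blast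
qed

lemma negligible_imp_moderate: "negligible f \<Longrightarrow> moderate f"
proof -
  assume "negligible f"
  then obtain C where "\<forall>\<^sub>F e in at_right 0. norm (f e) \<le> C * e ^ 0"
    unfolding negligible_iff_eventually by blast
  then show "moderate f" unfolding moderate_iff_eventually by (intro exI[of _ 0] exI[of _ C]) simp
qed

lemma moderate_const: "moderate (\<lambda>_. c)"
  unfolding moderate_iff_eventually by (intro exI[of _ 0] exI[of _ "norm c"]) simp

lemma negligible_zero: "negligible (\<lambda>_. 0)"
  unfolding negligible_iff_eventually by (auto intro!: exI[of _ 0])

lemma negligible_uminus: "negligible f \<Longrightarrow> negligible (\<lambda>e. - f e)"
  by (rule negligible_dominated[where K=1]) auto

lemma moderate_uminus: "moderate f \<Longrightarrow> moderate (\<lambda>e. - f e)"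
  by (rule moderate_dominated[where K=1]) auto

lemma moderate_norm: "moderate f \<Longrightarrow> moderate (\<lambda>e. norm (f e))"
  by (rule moderate_dominated[where K=1]) auto

lemma negligible_minus: "negligible f \<Longrightarrow> negligible g \<Longrightarrow> negligible (\<lambda>e. f e - g e)"
  using negligible_add[of f "\<lambda>e. - g e"] negligible_uminus[of g] by simp

lemma negligible_norm: "negligible f \<Longrightarrow> negligible (\<lambda>e. norm (f e))"
  by (rule negligible_dominated[where K=1]) auto

lemma negligible_abs: "negligible f \<Longrightarrow> negligible (\<lambda>e. \<bar>f e :: real\<bar>)"
  by (rule negligible_dominated[where K=1]) auto

lemma negligible_cong_diff: "negligible (\<lambda>e. f e - g e) \<Longrightarrow> negligible f \<longleftrightarrow> negligible g"
  using negligible_add[of "\<lambda>e. f e - g e" g] negligible_minus[of f "\<lambda>e. f e - g e"] by auto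

lemma negligible_sqrt_abs:
  fixes f :: "real \<Rightarrow> real"
  assumes "negligible f" shows "negligible (\<lambda>e. sqrt \<bar>f e\<bar>)"
  unfolding negligible_iff_eventually
proof
  fix m
  obtain C where C: "\<forall>\<^sub>F e in at_right 0. norm (f e) \<le> C * e ^ (2*m)"
    using assms negligible_iff_eventually by blast
  have "\<forall>\<^sub>F e in at_right 0. norm (sqrt \<bar>f e\<bar>) \<le> sqrt \<bar>C\<bar> * e ^ m"
    using C eventually_at_right_less
  proof eventually_elim
    case (elim e)
    have "\<bar>f e\<bar> \<le> C * (e ^ m)\<^sup>2" using elim(1) by (simp add: power_mult mult.commute)
    also have "\<dots> \<le> \<bar>C\<bar> * (e ^ m)\<^sup>2" by (intro mult_right_mono) auto
    finally have "\<bar>f e\<bar> \<le> \<bar>C\<bar> * (e ^ m)\<^sup>2" .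
    then have "sqrt \<bar>f e\<bar> \<le> sqrt (\<bar>C\<bar> * (e ^ m)\<^sup>2)" by (rule real_sqrt_le_mono)
    also have "\<dots> = sqrt \<bar>C\<bar> * e ^ m" using elim by (simp add: real_sqrt_mult)
    finally show ?case by simp
  qed
  then show "\<exists>C. \<forall>\<^sub>F e in at_right 0. norm (sqrt \<bar>f e\<bar>) \<le> C * e ^ m" by blast
qed

lemma negligible_exp_neg_inverse: "negligible (\<lambda>e::real. exp (- 1 / e))"
  unfolding negligible_iff_eventually
proof
  fix m :: nat
  define n where "n = Suc m"
  have "\<forall>\<^sub>F e in at_right 0. norm (exp (- 1 / e)) \<le> (real n ^ n) * e ^ m"
    using eventually_at_right_less eventually_at_right_0_le_1
  proof eventually_elim
    case (elim e)
    have "(1 / (e * real n)) ^ n \<le> (1 + (1/e) / real n) ^ n"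
      using elim by (intro power_mono) (auto simp: n_def)
    also have "\<dots> \<le> exp (1/e)"
    proof (rule exp_ge_one_plus_x_over_n_power_n)
      have "0 < 1/e" using elim by simp
      moreover have "- real n \<le> 0" by simp
      ultimately show "- real n \<le> 1/e" by linarith
    qed (simp add: n_def)
    finally have le: "(1 / (e * real n)) ^ n \<le> exp (1/e)" .
    have pos: "0 < (1 / (e * real n)) ^ n" using elim by (simp add: n_def)
    have "exp (- 1 / e) = inverse (exp (1/e))" by (simp add: exp_minus[symmetric])
    also have "\<dots> \<le> inverse ((1 / (e * real n)) ^ n)" using le pos by (rule le_imp_inverse_le)
    also have "\<dots> = real n ^ n * e ^ n" by (simp add: power_mult_distrib field_simps)
    also have "\<dots> \<le> real n ^ n * e ^ m"
      using elim by (intro mult_left_mono power_decreasing) (auto simp: n_def)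
    finally show ?case by simp
  qed
  then show "\<exists>C. \<forall>\<^sub>F e in at_right 0. norm (exp (- 1 / e)) \<le> C * e ^ m" by blast
qed

section \<open>Smooth nets\<close>

definition has_net_derivative :: "(real \<Rightarrow> 'a::real_normed_vector) \<Rightarrow> (real \<Rightarrow> 'a) \<Rightarrow> bool" where
  "has_net_derivative f f' \<longleftrightarrow> (\<forall>e\<in>Iset. (f has_vector_derivative f' e) (at e within Iset))"

lemma has_net_derivative_real_iff:
  "has_net_derivative f f' \<longleftrightarrow> (\<forall>e\<in>Iset. (f has_field_derivative f' e) (at e within Iset))"
  for f :: "real \<Rightarrow> real"
  by (simp add: has_net_derivative_def has_real_derivative_iff_has_vector_derivative)

lemma smooth_net_coinduct:
  assumes "P f" "\<And>g. P g \<Longrightarrow> \<exists>g'. has_net_derivative g g' \<and> P g'"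
  shows "smooth_net f"
proof -
  define d where "d g = (SOME g'. has_net_derivative g g' \<and> P g')" for g
  have d: "has_net_derivative g (d g) \<and> P (d g)" if "P g" for g
    unfolding d_def using assms(2)[OF that] by (rule someI_ex)
  define D where "D n = (d ^^ n) f" for n
  have "P (D n)" for n by (induction n) (simp_all add: D_def d assms(1))
  then have "has_net_derivative (D n) (D (Suc n))" for n using d by (simp add: D_def)
  then show ?thesis unfolding smooth_net_def has_net_derivative_def
    by (intro exI[of _ D]) (auto simp: D_def)
qed

lemma smooth_net_has_derivative:
  assumes "smooth_net f" shows "\<exists>f'. has_net_derivative f f' \<and> smooth_net f'"
proof -
  obtain D where D0: "\<forall>e\<in>Iset. D 0 e = f e"
    and DS: "\<forall>n. \<forall>e\<in>Iset. (D n has_vector_derivative D (Suc n) e) (at e within Iset)"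
    using assms unfolding smooth_net_def by blast
  have "has_net_derivative f (D 1)" unfolding has_net_derivative_def
  proof
    fix e assume e: "e \<in> Iset"
    have d: "(D 0 has_vector_derivative D 1 e) (at e within Iset)" using DS e by simp
    show "(f has_vector_derivative D 1 e) (at e within Iset)"
      by (rule has_vector_derivative_transform[OF e _ d]) (use D0 in auto)
  qed
  moreover have "smooth_net (D 1)" unfolding smooth_net_def
    by (intro exI[of _ "\<lambda>n. D (Suc n)"]) (use DS in auto)
  ultimately show ?thesis by blast
qed

lemma smooth_net_continuous_on: "smooth_net f \<Longrightarrow> continuous_on Iset f"
  using smooth_net_has_derivative[of f] unfolding has_net_derivative_def
  by (auto intro: continuous_on_vector_derivative)

lemma smooth_net_const: "smooth_net (\<lambda>_. c)"
  by (rule smooth_net_coinduct[where P="\<lambda>g. \<exists>c. g = (\<lambda>_. c)"])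
    (auto simp: has_net_derivative_def intro!: exI[of _ "\<lambda>_. 0"] derivative_eq_intros)

lemma smooth_net_ident: "smooth_net (\<lambda>e. e)"
proof (rule smooth_net_coinduct[where P="\<lambda>g. g = (\<lambda>e. e) \<or> (\<exists>c. g = (\<lambda>_. c))"])
  fix g :: "real \<Rightarrow> real" assume "g = (\<lambda>e. e) \<or> (\<exists>c. g = (\<lambda>_. c))"
  then show "\<exists>g'. has_net_derivative g g' \<and> (g' = (\<lambda>e. e) \<or> (\<exists>c. g' = (\<lambda>_. c)))"
  proof
    assume "g = (\<lambda>e. e)" then show ?thesis
      by (auto simp: has_net_derivative_def intro!: exI[of _ "\<lambda>_. 1"] derivative_eq_intros)
  next
    assume "\<exists>c. g = (\<lambda>_. c)" then show ?thesis
      by (auto simp: has_net_derivative_def intro!: exI[of _ "\<lambda>_. 0"] derivative_eq_intros)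
  qed
qed simp

lemma smooth_net_bounded_linear:
  assumes L: "bounded_linear L" and f: "smooth_net f"
  shows "smooth_net (\<lambda>e. L (f e))"
proof -
  obtain D where "\<forall>e\<in>Iset. D 0 e = f e"
    and "\<forall>n. \<forall>e\<in>Iset. (D n has_vector_derivative D (Suc n) e) (at e within Iset)"
    using f unfolding smooth_net_def by blast
  then show ?thesis unfolding smooth_net_def
    by (intro exI[of _ "\<lambda>n e. L (D n e)"]) (auto intro: bounded_linear.has_vector_derivative[OF L])
qed

text \<open>
  Closure under products is proved by exhibiting a set of nets that contains the smooth ones,
  is closed under the operations, and contains a derivative of each of its members
  (Leibniz rule); its members are then smooth by coinduction.
\<close>

inductive_set smooth_ring_terms :: "(real \<Rightarrow> 'a::real_normed_field) set" where
  base: "smooth_net f \<Longrightarrow> f \<in> smooth_ring_terms"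
| add: "f \<in> smooth_ring_terms \<Longrightarrow> g \<in> smooth_ring_terms \<Longrightarrow> (\<lambda>e. f e + g e) \<in> smooth_ring_terms"
| mult: "f \<in> smooth_ring_terms \<Longrightarrow> g \<in> smooth_ring_terms \<Longrightarrow> (\<lambda>e. f e * g e) \<in> smooth_ring_terms"

lemma smooth_ring_terms_has_derivative:
  "f \<in> smooth_ring_terms \<Longrightarrow> \<exists>f'. has_net_derivative f f' \<and> f' \<in> smooth_ring_terms"
proof (induction rule: smooth_ring_terms.induct)
  case (base f) then show ?case using smooth_net_has_derivative smooth_ring_terms.base by blast
next
  case (add f g)
  then obtain f' g' where d: "has_net_derivative f f'" "f' \<in> smooth_ring_terms"
    "has_net_derivative g g'" "g' \<in> smooth_ring_terms" by blast
  have "(\<lambda>e. f' e + g' e) \<in> smooth_ring_terms" by (rule smooth_ring_terms.add[OF d(2) d(4)])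
  moreover have "has_net_derivative (\<lambda>e. f e + g e) (\<lambda>e. f' e + g' e)"
    using d(1,3) unfolding has_net_derivative_def by (auto intro: has_vector_derivative_add)
  ultimately show ?case by blast
next
  case (mult f g)
  then obtain f' g' where d: "has_net_derivative f f'" "f' \<in> smooth_ring_terms"
    "has_net_derivative g g'" "g' \<in> smooth_ring_terms" by blast
  have "(\<lambda>e. f e * g' e + f' e * g e) \<in> smooth_ring_terms"
    by (rule smooth_ring_terms.add[OF smooth_ring_terms.mult[OF mult(1) d(4)]
          smooth_ring_terms.mult[OF d(2) mult(2)]])
  moreover have "has_net_derivative (\<lambda>e. f e * g e) (\<lambda>e. f e * g' e + f' e * g e)"
    using d(1,3) unfolding has_net_derivative_def by (auto intro: has_vector_derivative_mult)
  ultimately show ?case by blast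
qed

lemma smooth_ring_terms_smooth: "f \<in> smooth_ring_terms \<Longrightarrow> smooth_net f"
  by (rule smooth_net_coinduct[where P="\<lambda>f. f \<in> smooth_ring_terms"])
    (use smooth_ring_terms_has_derivative in blast)+

lemma smooth_net_add:
  fixes f g :: "real \<Rightarrow> 'a::real_normed_field"
  shows "smooth_net f \<Longrightarrow> smooth_net g \<Longrightarrow> smooth_net (\<lambda>e. f e + g e)"
  by (rule smooth_ring_terms_smooth, rule smooth_ring_terms.add; rule smooth_ring_terms.base)

lemma smooth_net_mult:
  fixes f g :: "real \<Rightarrow> 'a::real_normed_field"
  shows "smooth_net f \<Longrightarrow> smooth_net g \<Longrightarrow> smooth_net (\<lambda>e. f e * g e)"
  by (rule smooth_ring_terms_smooth, rule smooth_ring_terms.mult; rule smooth_ring_terms.base)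

lemma smooth_net_uminus: "smooth_net f \<Longrightarrow> smooth_net (\<lambda>e. - f e)"
  using smooth_net_bounded_linear[of "\<lambda>x. - x" f] bounded_linear_minus[OF bounded_linear_ident]
  by simp

lemma smooth_net_diff:
  fixes f g :: "real \<Rightarrow> 'a::real_normed_field"
  shows "smooth_net f \<Longrightarrow> smooth_net g \<Longrightarrow> smooth_net (\<lambda>e. f e - g e)"
  using smooth_net_add[of f "\<lambda>e. - g e"] smooth_net_uminus[of g] by simp

lemma smooth_net_norm_sq_real: "smooth_net f \<Longrightarrow> smooth_net (\<lambda>e. (norm (f e :: real))\<^sup>2)"
  using smooth_net_mult[of f f] by (simp add: power2_eq_square)

lemma smooth_net_norm_sq_complex: "smooth_net f \<Longrightarrow> smooth_net (\<lambda>e. (norm (f e :: complex))\<^sup>2)"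
proof -
  assume f: "smooth_net f"
  have re: "smooth_net (\<lambda>e. Re (f e))" by (rule smooth_net_bounded_linear[OF bounded_linear_Re f])
  have im: "smooth_net (\<lambda>e. Im (f e))" by (rule smooth_net_bounded_linear[OF bounded_linear_Im f])
  have "smooth_net (\<lambda>e. Re (f e) * Re (f e) + Im (f e) * Im (f e))"
    by (rule smooth_net_add[OF smooth_net_mult[OF re re] smooth_net_mult[OF im im]])
  moreover have "(norm (f e))\<^sup>2 = Re (f e) * Re (f e) + Im (f e) * Im (f e)" for e
    by (subst cmod_power2) (simp add: power2_eq_square)
  ultimately show ?thesis by simp
qed

inductive_set smooth_real_terms :: "(real \<Rightarrow> real) set" where
  base: "smooth_net f \<Longrightarrow> f \<in> smooth_real_terms"
| add: "f \<in> smooth_real_terms \<Longrightarrow> g \<in> smooth_real_terms \<Longrightarrow> (\<lambda>e. f e + g e) \<in> smooth_real_terms"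
| mult: "f \<in> smooth_real_terms \<Longrightarrow> g \<in> smooth_real_terms \<Longrightarrow> (\<lambda>e. f e * g e) \<in> smooth_real_terms"
| inverse: "f \<in> smooth_real_terms \<Longrightarrow> \<forall>e\<in>Iset. f e \<noteq> 0 \<Longrightarrow> (\<lambda>e. inverse (f e)) \<in> smooth_real_terms"
| sqrt: "f \<in> smooth_real_terms \<Longrightarrow> \<forall>e\<in>Iset. f e > 0 \<Longrightarrow> (\<lambda>e. sqrt (f e)) \<in> smooth_real_terms"
| exp: "f \<in> smooth_real_terms \<Longrightarrow> (\<lambda>e. exp (f e)) \<in> smooth_real_terms"

lemma smooth_real_terms_has_derivative:
  "f \<in> smooth_real_terms \<Longrightarrow> \<exists>f'. has_net_derivative f f' \<and> f' \<in> smooth_real_terms"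
proof (induction rule: smooth_real_terms.induct)
  case (base f) then show ?case using smooth_net_has_derivative smooth_real_terms.base by blast
next
  case (add f g)
  then obtain f' g' where d: "has_net_derivative f f'" "f' \<in> smooth_real_terms"
    "has_net_derivative g g'" "g' \<in> smooth_real_terms" by blast
  have "(\<lambda>e. f' e + g' e) \<in> smooth_real_terms" by (rule smooth_real_terms.add[OF d(2) d(4)])
  moreover have "has_net_derivative (\<lambda>e. f e + g e) (\<lambda>e. f' e + g' e)"
    using d(1,3) unfolding has_net_derivative_def by (auto intro: has_vector_derivative_add)
  ultimately show ?case by blast
next
  case (mult f g)
  then obtain f' g' where d: "has_net_derivative f f'" "f' \<in> smooth_real_terms"
    "has_net_derivative g g'" "g' \<in> smooth_real_terms" by blast
  have "(\<lambda>e. f e * g' e + f' e * g e) \<in> smooth_real_terms"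
    by (rule smooth_real_terms.add[OF smooth_real_terms.mult[OF mult(1) d(4)]
          smooth_real_terms.mult[OF d(2) mult(2)]])
  moreover have "has_net_derivative (\<lambda>e. f e * g e) (\<lambda>e. f e * g' e + f' e * g e)"
    using d(1,3) unfolding has_net_derivative_def by (auto intro: has_vector_derivative_mult)
  ultimately show ?case by blast
next
  case (inverse f)
  then obtain f' where f': "has_net_derivative f f'" "f' \<in> smooth_real_terms" by blast
  have "(\<lambda>e. - 1) \<in> smooth_real_terms" by (rule smooth_real_terms.base[OF smooth_net_const])
  then have "(\<lambda>e. (- 1) * (inverse (f e) * f' e * inverse (f e))) \<in> smooth_real_terms"
    using inverse f' by (intro smooth_real_terms.mult smooth_real_terms.inverse) auto
  moreover have "has_net_derivative (\<lambda>e. inverse (f e)) (\<lambda>e. (- 1) * (inverse (f e) * f' e * inverse (f e)))"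
    using f'(1) inverse unfolding has_net_derivative_real_iff by (auto intro!: derivative_eq_intros)
  ultimately show ?case by blast
next
  case (sqrt f)
  then obtain f' where f': "has_net_derivative f f'" "f' \<in> smooth_real_terms" by blast
  have "(\<lambda>e. 2 * sqrt (f e)) \<in> smooth_real_terms"
    using sqrt by (intro smooth_real_terms.mult smooth_real_terms.sqrt smooth_real_terms.base[OF smooth_net_const])
  then have "(\<lambda>e. inverse (2 * sqrt (f e))) \<in> smooth_real_terms"
    by (rule smooth_real_terms.inverse) (use sqrt in auto)
  then have "(\<lambda>e. f' e * inverse (2 * sqrt (f e))) \<in> smooth_real_terms"
    by (rule smooth_real_terms.mult[OF f'(2)])
  moreover have "has_net_derivative (\<lambda>e. sqrt (f e)) (\<lambda>e. f' e * inverse (2 * sqrt (f e)))"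
    using f'(1) sqrt unfolding has_net_derivative_real_iff
    by (auto intro!: derivative_eq_intros simp: field_simps)
  ultimately show ?case by blast
next
  case (exp f)
  then obtain f' where f': "has_net_derivative f f'" "f' \<in> smooth_real_terms" by blast
  have "(\<lambda>e. exp (f e) * f' e) \<in> smooth_real_terms"
    using exp f' by (intro smooth_real_terms.mult smooth_real_terms.exp)
  moreover have "has_net_derivative (\<lambda>e. exp (f e)) (\<lambda>e. exp (f e) * f' e)"
    using f'(1) unfolding has_net_derivative_real_iff by (auto intro!: derivative_eq_intros)
  ultimately show ?case by blast
qed

lemma smooth_real_terms_smooth: "f \<in> smooth_real_terms \<Longrightarrow> smooth_net f"
  by (rule smooth_net_coinduct[where P="\<lambda>f. f \<in> smooth_real_terms"])
    (use smooth_real_terms_has_derivative in blast)+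

lemma smooth_net_inverse:
  "smooth_net f \<Longrightarrow> \<forall>e\<in>Iset. f e \<noteq> 0 \<Longrightarrow> smooth_net (\<lambda>e. inverse (f e :: real))"
  by (rule smooth_real_terms_smooth[OF smooth_real_terms.inverse[OF smooth_real_terms.base]])

lemma smooth_net_sqrt:
  "smooth_net f \<Longrightarrow> \<forall>e\<in>Iset. f e > 0 \<Longrightarrow> smooth_net (\<lambda>e. sqrt (f e))"
  by (rule smooth_real_terms_smooth[OF smooth_real_terms.sqrt[OF smooth_real_terms.base]])

lemma smooth_net_exp: "smooth_net f \<Longrightarrow> smooth_net (\<lambda>e. exp (f e :: real))"
  by (rule smooth_real_terms_smooth[OF smooth_real_terms.exp[OF smooth_real_terms.base]])

lemma smooth_net_exp_neg_inverse: "smooth_net (\<lambda>e::real. exp (- 1 / e))"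
proof -
  have "smooth_net (\<lambda>e::real. (- 1) * inverse e)"
    by (rule smooth_net_mult[OF smooth_net_const smooth_net_inverse[OF smooth_net_ident]]) simp
  then show ?thesis using smooth_net_exp by (simp add: divide_inverse)
qed

section \<open>The ring of smooth generalized numbers\<close>

lemma net_ring_simps [simp]:
  "carrier (net_ring A) = A"
  "x \<otimes>\<^bsub>net_ring A\<^esub> y = (\<lambda>e. x e * y e)"
  "x \<oplus>\<^bsub>net_ring A\<^esub> y = (\<lambda>e. x e + y e)"
  "\<one>\<^bsub>net_ring A\<^esub> = (\<lambda>_. 1)"
  "\<zero>\<^bsub>net_ring A\<^esub> = (\<lambda>_. 0)"
  by (simp_all add: net_ring_def)

locale net_algebra =
  fixes A :: "(real \<Rightarrow> 'a::real_normed_field) set"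
  assumes add_closed: "f \<in> A \<Longrightarrow> g \<in> A \<Longrightarrow> (\<lambda>e. f e + g e) \<in> A"
    and mult_closed: "f \<in> A \<Longrightarrow> g \<in> A \<Longrightarrow> (\<lambda>e. f e * g e) \<in> A"
    and uminus_closed: "f \<in> A \<Longrightarrow> (\<lambda>e. - f e) \<in> A"
    and zero_closed: "(\<lambda>_. 0) \<in> A"
    and one_closed: "(\<lambda>_. 1) \<in> A"
begin

lemma cring_net_ring: "cring (net_ring A)"
proof (rule cringI)
  show "abelian_group (net_ring A)"
  proof (rule abelian_groupI, simp_all add: add_closed zero_closed)
    fix x assume "x \<in> A"
    then show "\<exists>y\<in>A. (\<lambda>e. y e + x e) = (\<lambda>_. 0)"
      by (intro bexI[of _ "\<lambda>e. - x e"]) (auto intro: uminus_closed)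
  qed (auto simp: algebra_simps)
  show "comm_monoid (net_ring A)"
    by (rule comm_monoidI) (auto simp: mult_closed one_closed algebra_simps)
qed (auto simp: algebra_simps)

lemma a_inv_net_ring: "f \<in> A \<Longrightarrow> \<ominus>\<^bsub>net_ring A\<^esub> f = (\<lambda>e. - f e)"
proof -
  assume f: "f \<in> A"
  interpret R: cring "net_ring A" by (rule cring_net_ring)
  show ?thesis by (rule R.minus_equality) (auto intro: uminus_closed f)
qed

lemma a_minus_net_ring: "f \<in> A \<Longrightarrow> g \<in> A \<Longrightarrow> f \<ominus>\<^bsub>net_ring A\<^esub> g = (\<lambda>e. f e - g e)"
  by (simp add: a_minus_def a_inv_net_ring)

lemma ideal_net_ring:
  assumes "J \<subseteq> A" "(\<lambda>_. 0) \<in> J" "\<And>f g. f \<in> J \<Longrightarrow> g \<in> J \<Longrightarrow> (\<lambda>e. f e + g e) \<in> J"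
    "\<And>f. f \<in> J \<Longrightarrow> (\<lambda>e. - f e) \<in> J"
    "\<And>f g. f \<in> J \<Longrightarrow> g \<in> A \<Longrightarrow> (\<lambda>e. g e * f e) \<in> J"
  shows "ideal J (net_ring A)"
proof (rule idealI)
  show "ring (net_ring A)" using cring_net_ring cring.axioms(1) by blast
  then interpret R: ring "net_ring A" .
  show "subgroup J (add_monoid (net_ring A))"
  proof (rule R.add.subgroupI, goal_cases)
    case (3 a)
    then have "\<ominus>\<^bsub>net_ring A\<^esub> a = (\<lambda>e. - a e)" using assms(1) a_inv_net_ring by blast
    then show ?case using assms(4)[OF 3] unfolding a_inv_def by simp
  qed (use assms(1-3) in auto)
qed (use assms(5) in \<open>auto simp: mult.commute\<close>)

end

lemma net_ring_rcos_eq_iff: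
  assumes "(\<lambda>_. 0) \<in> H" "\<And>f g. f \<in> H \<Longrightarrow> g \<in> H \<Longrightarrow> (\<lambda>e. f e + g e) \<in> H"
    and "\<And>f. f \<in> H \<Longrightarrow> (\<lambda>e. - f e) \<in> H"
  shows "a_r_coset (net_ring A) H f = a_r_coset (net_ring A) H g \<longleftrightarrow>
    (\<lambda>e. f e - g e) \<in> (H :: (real \<Rightarrow> 'a::real_normed_field) set)"
proof -
  have rcos: "a_r_coset (net_ring A) H f = (\<lambda>h e. h e + f e) ` H" for f
    by (auto simp: a_r_coset_def r_coset_def net_ring_def)
  have sub: "(\<lambda>h e. h e + f e) ` H \<subseteq> (\<lambda>h e. h e + g e) ` H"
    if "(\<lambda>e. f e - g e) \<in> H" for f g
  proof
    fix x assume "x \<in> (\<lambda>h e. h e + f e) ` H"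
    then obtain h where h: "h \<in> H" "x = (\<lambda>e. h e + f e)" by auto
    then have "(\<lambda>e. h e + (f e - g e)) \<in> H" "x = (\<lambda>e. (h e + (f e - g e)) + g e)"
      using assms(2)[OF h(1) that] by auto
    then show "x \<in> (\<lambda>h e. h e + g e) ` H" by (intro image_eqI) auto
  qed
  show ?thesis unfolding rcos
  proof
    assume eq: "(\<lambda>h e. h e + f e) ` H = (\<lambda>h e. h e + g e) ` H"
    have "f \<in> (\<lambda>h e. h e + f e) ` H" using assms(1) by (auto intro!: image_eqI[of _ _ "\<lambda>_. 0"])
    then obtain h where "h \<in> H" "f = (\<lambda>e. h e + g e)" using eq by auto
    then show "(\<lambda>e. f e - g e) \<in> H" by simp
  next
    assume d: "(\<lambda>e. f e - g e) \<in> H"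
    moreover have "(\<lambda>e. g e - f e) \<in> H" using assms(3)[OF d] by simp
    ultimately show "(\<lambda>h e. h e + f e) ` H = (\<lambda>h e. h e + g e) ` H" using sub by blast
  qed
qed

abbreviation sm_class :: "(real \<Rightarrow> 'a::real_normed_field) \<Rightarrow> (real \<Rightarrow> 'a) set" where
  "sm_class f \<equiv> a_r_coset (net_ring EM_sm) N_sm f"

lemma net_algebra_EM_sm: "net_algebra (EM_sm :: (real \<Rightarrow> 'a::real_normed_field) set)"
  by unfold_locales
    (auto simp: EM_sm_def intro: smooth_net_add smooth_net_mult smooth_net_uminus smooth_net_const
      moderate_add moderate_mult moderate_uminus moderate_const)

lemma N_sm_subset_EM_sm: "N_sm \<subseteq> EM_sm"
  by (auto simp: N_sm_def EM_sm_def intro: negligible_imp_moderate)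

lemma N_sm_closed:
  "(\<lambda>_. 0) \<in> (N_sm :: (real \<Rightarrow> 'a::real_normed_field) set)"
  "f \<in> N_sm \<Longrightarrow> g \<in> N_sm \<Longrightarrow> (\<lambda>e. f e + g e) \<in> (N_sm :: (real \<Rightarrow> 'a::real_normed_field) set)"
  "f \<in> N_sm \<Longrightarrow> (\<lambda>e. - f e) \<in> (N_sm :: (real \<Rightarrow> 'a::real_normed_field) set)"
  by (simp_all add: N_sm_def smooth_net_const negligible_zero smooth_net_add negligible_add
      smooth_net_uminus negligible_uminus)

lemma N_co_closed:
  "(\<lambda>_. 0) \<in> (N_co :: (real \<Rightarrow> 'a::real_normed_field) set)"
  "f \<in> N_co \<Longrightarrow> g \<in> N_co \<Longrightarrow> (\<lambda>e. f e + g e) \<in> (N_co :: (real \<Rightarrow> 'a::real_normed_field) set)"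
  "f \<in> N_co \<Longrightarrow> (\<lambda>e. - f e) \<in> (N_co :: (real \<Rightarrow> 'a::real_normed_field) set)"
  by (simp_all add: N_co_def cont_net_def negligible_zero continuous_on_add negligible_add
      continuous_on_minus negligible_uminus)

lemma ideal_N_sm: "ideal (N_sm :: (real \<Rightarrow> 'a::real_normed_field) set) (net_ring EM_sm)"
  by (rule net_algebra.ideal_net_ring[OF net_algebra_EM_sm N_sm_subset_EM_sm N_sm_closed])
    (auto simp: N_sm_def EM_sm_def intro: smooth_net_mult negligible_mult_moderate)

lemma cring_Ksm: "cring (Ksm :: (real \<Rightarrow> 'a::real_normed_field) set ring)"
  unfolding Ksm_def
  by (rule ideal.quotient_is_cring[OF ideal_N_sm net_algebra.cring_net_ring[OF net_algebra_EM_sm]])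

lemma ring_hom_cring_sm_class:
  "ring_hom_cring (net_ring EM_sm) (Ksm :: (real \<Rightarrow> 'a::real_normed_field) set ring) sm_class"
  unfolding Ksm_def
  by (rule ideal.rcos_ring_hom_cring[OF ideal_N_sm net_algebra.cring_net_ring[OF net_algebra_EM_sm]])

lemma carrier_Ksm: "carrier (Ksm :: (real \<Rightarrow> 'a::real_normed_field) set ring) = sm_class ` EM_sm"
  unfolding Ksm_def FactRing_def A_RCOSETS_def' by auto

lemma zero_Ksm: "\<zero>\<^bsub>Ksm\<^esub> = N_sm"
  unfolding Ksm_def FactRing_def by simp

lemma sm_class_eq_iff:
  "sm_class f = sm_class g \<longleftrightarrow> (\<lambda>e. f e - g e) \<in> (N_sm :: (real \<Rightarrow> 'a::real_normed_field) set)"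
  by (rule net_ring_rcos_eq_iff[OF N_sm_closed])

lemma sm_class_eq_zero_iff:
  assumes "f \<in> EM_sm" shows "sm_class f = \<zero>\<^bsub>Ksm\<^esub> \<longleftrightarrow> negligible (f :: real \<Rightarrow> 'a::real_normed_field)"
proof -
  have "sm_class f = \<zero>\<^bsub>Ksm\<^esub> \<longleftrightarrow> sm_class f = sm_class (\<lambda>_. 0::'a)"
    using sm_class_eq_iff[of "\<lambda>_. 0" "\<lambda>_. 0"] N_sm_closed(1)
    by (simp add: zero_Ksm a_r_coset_def r_coset_def net_ring_def)
  also have "\<dots> \<longleftrightarrow> f \<in> N_sm" by (simp add: sm_class_eq_iff)
  finally show ?thesis using assms by (auto simp: N_sm_def EM_sm_def)
qed

lemma sm_class_mult:
  assumes "f \<in> EM_sm" "g \<in> EM_sm"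
  shows "sm_class f \<otimes>\<^bsub>Ksm\<^esub> sm_class g = sm_class (\<lambda>e. f e * g e :: 'a::real_normed_field)"
proof -
  interpret H: ring_hom_cring "net_ring EM_sm" "Ksm :: (real \<Rightarrow> 'a) set ring" sm_class
    by (rule ring_hom_cring_sm_class)
  show ?thesis using H.hom_mult[of f g] assms by simp
qed

lemma one_minus_sm_class:
  assumes "f \<in> EM_sm"
  shows "\<one>\<^bsub>Ksm\<^esub> \<ominus>\<^bsub>Ksm\<^esub> sm_class f = sm_class (\<lambda>e. 1 - f e :: 'a::real_normed_field)"
proof -
  interpret H: ring_hom_cring "net_ring EM_sm" "Ksm :: (real \<Rightarrow> 'a) set ring" sm_class
    by (rule ring_hom_cring_sm_class)
  have f: "f \<in> carrier (net_ring EM_sm)" using assms by simp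
  have "sm_class (\<one>\<^bsub>net_ring EM_sm\<^esub> \<ominus>\<^bsub>net_ring EM_sm\<^esub> f)
      = sm_class \<one>\<^bsub>net_ring EM_sm\<^esub> \<ominus>\<^bsub>Ksm\<^esub> sm_class f"
    unfolding a_minus_def H.hom_add[OF H.R.one_closed H.R.a_inv_closed[OF f]] H.hom_a_inv[OF f] ..
  moreover have "\<one>\<^bsub>net_ring EM_sm\<^esub> \<ominus>\<^bsub>net_ring EM_sm\<^esub> f = (\<lambda>e. 1 - f e)"
    using net_algebra.a_minus_net_ring[OF net_algebra_EM_sm net_algebra.one_closed[OF net_algebra_EM_sm] assms]
    by simp
  ultimately show ?thesis using H.hom_one by simp
qed

lemma some_in_sm_class:
  assumes "f \<in> EM_sm"
  shows "(SOME p. p \<in> sm_class f) \<in> EM_sm"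
    and "(\<lambda>e. (SOME p. p \<in> sm_class f) e - f e) \<in> (N_sm :: (real \<Rightarrow> 'a::real_normed_field) set)"
proof -
  have "f \<in> sm_class f" using sm_class_eq_iff[of f f] N_sm_closed(1)
    by (auto simp: a_r_coset_def r_coset_def net_ring_def intro!: bexI[of _ "\<lambda>_. 0"])
  then have "(SOME p. p \<in> sm_class f) \<in> sm_class f" by (rule someI[where P="\<lambda>p. p \<in> sm_class f"])
  then obtain h where h: "h \<in> N_sm" "(SOME p. p \<in> sm_class f) = (\<lambda>e. h e + f e)"
    by (auto simp: a_r_coset_def r_coset_def net_ring_def)
  then show "(\<lambda>e. (SOME p. p \<in> sm_class f) e - f e) \<in> N_sm" by simp
  show "(SOME p. p \<in> sm_class f) \<in> EM_sm"
    using h assms N_sm_subset_EM_sm net_algebra.add_closed[OF net_algebra_EM_sm] by auto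
qed

lemma co_class_eq_iff:
  "co_class f = co_class g \<longleftrightarrow> (\<lambda>e. f e - g e) \<in> (N_co :: (real \<Rightarrow> 'a::real_normed_field) set)"
  unfolding co_class_def by (rule net_ring_rcos_eq_iff[OF N_co_closed])

lemma tau_sm_sm_class:
  assumes "f \<in> EM_sm" shows "tau_sm (sm_class f) = co_class (f :: real \<Rightarrow> 'a::real_normed_field)"
  unfolding tau_sm_def co_class_eq_iff using some_in_sm_class(2)[OF assms]
  by (auto simp: N_sm_def N_co_def cont_net_def intro: smooth_net_continuous_on)

lemma inj_on_tau_sm: "inj_on tau_sm (carrier (Ksm :: (real \<Rightarrow> 'a::real_normed_field) set ring))"
proof (rule inj_onI)
  fix x y :: "(real \<Rightarrow> 'a) set"
  assume "x \<in> carrier Ksm" "y \<in> carrier Ksm" and eq: "tau_sm x = tau_sm y"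
  then obtain f g where fg: "f \<in> EM_sm" "g \<in> EM_sm" "x = sm_class f" "y = sm_class g"
    unfolding carrier_Ksm by auto
  then have "(\<lambda>e. f e - g e) \<in> N_co" using eq tau_sm_sm_class co_class_eq_iff by metis
  moreover have "smooth_net (\<lambda>e. f e - g e)" using fg by (auto simp: EM_sm_def intro: smooth_net_diff)
  ultimately have "(\<lambda>e. f e - g e) \<in> N_sm" by (auto simp: N_sm_def N_co_def)
  then show "x = y" using fg sm_class_eq_iff by blast
qed

lemma inv_tau_sm_co_class:
  assumes "f \<in> EM_sm" "continuous_on Iset (\<lambda>e. g e - f e)" "negligible (\<lambda>e. g e - f e)"
  shows "inv_into (carrier Ksm) tau_sm (co_class g) = sm_class (f :: real \<Rightarrow> 'a::real_normed_field)"
proof -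
  have "co_class g = tau_sm (sm_class f)"
    using assms by (simp add: tau_sm_sm_class co_class_eq_iff N_co_def cont_net_def)
  then show ?thesis using inv_into_f_f[OF inj_on_tau_sm] assms(1) carrier_Ksm by auto
qed

section \<open>Absolute value and minimum\<close>

lemma sqrt_sum_squares_bounds:
  fixes x E :: real
  assumes "0 \<le> x" "0 \<le> E"
  shows "x \<le> sqrt (x\<^sup>2 + E\<^sup>2)" "sqrt (x\<^sup>2 + E\<^sup>2) \<le> x + E"
proof -
  have "x = sqrt (x\<^sup>2)" using assms by simp
  also have "\<dots> \<le> sqrt (x\<^sup>2 + E\<^sup>2)" by (intro real_sqrt_le_mono) simp
  finally show "x \<le> sqrt (x\<^sup>2 + E\<^sup>2)" .
  have "x\<^sup>2 + E\<^sup>2 \<le> (x + E)\<^sup>2" using assms by (simp add: power2_sum)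
  then have "sqrt (x\<^sup>2 + E\<^sup>2) \<le> sqrt ((x + E)\<^sup>2)" by (rule real_sqrt_le_mono)
  also have "\<dots> = x + E" using assms by simp
  finally show "sqrt (x\<^sup>2 + E\<^sup>2) \<le> x + E" .
qed

lemma smooth_min_bounds:
  fixes x y E :: real
  assumes E: "0 < E"
  shows "\<bar>(1/2) * ((x + y) - sqrt ((x - y) * (x - y) + E * E)) - min x y\<bar> \<le> E"
    "\<bar>(1/2) * ((x + y) - sqrt ((x - y) * (x - y) + E * E))\<bar> \<le> \<bar>x\<bar> + \<bar>y\<bar> + E"
proof -
  define D where "D = \<bar>x - y\<bar>"
  define S where "S = sqrt ((x - y) * (x - y) + E * E)"
  have D0: "0 \<le> D" unfolding D_def by simp
  have "S = sqrt (D\<^sup>2 + E\<^sup>2)" unfolding S_def D_def by (simp add: power2_eq_square)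
  then have S: "D \<le> S" "S \<le> D + E" using sqrt_sum_squares_bounds[OF D0, of E] E by auto
  have "min x y = (x + y - D) / 2" unfolding D_def by (auto simp: min_def abs_if)
  then show "\<bar>(1/2) * ((x + y) - sqrt ((x - y) * (x - y) + E * E)) - min x y\<bar> \<le> E"
    unfolding S_def[symmetric] using S E by (simp add: abs_le_iff field_simps)
  have "D \<le> \<bar>x\<bar> + \<bar>y\<bar>" "\<bar>x + y\<bar> \<le> \<bar>x\<bar> + \<bar>y\<bar>" unfolding D_def by linarith+
  then show "\<bar>(1/2) * ((x + y) - sqrt ((x - y) * (x - y) + E * E))\<bar> \<le> \<bar>x\<bar> + \<bar>y\<bar> + E"
    unfolding S_def[symmetric] using S E D0 by (simp add: abs_le_iff)
qed

lemma abs_min_diff_le: "\<bar>min a b - min c d\<bar> \<le> \<bar>a - c\<bar> + \<bar>b - (d::real)\<bar>"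
  by (auto simp: min_def)

text \<open>
  Besides being a real normed field, the proof needs only that \<open>|f|\<^sup>2\<close> is smooth for smooth \<open>f\<close>;
  this is assumed as the hypothesis \<open>norm_sq\<close> and holds for \<open>\<real>\<close> and \<open>\<complex>\<close>.
\<close>

lemma gabs_sm_class:
  assumes norm_sq: "\<And>f::real \<Rightarrow> 'a::real_normed_field. smooth_net f \<Longrightarrow> smooth_net (\<lambda>e. (norm (f e))\<^sup>2)"
    and p: "p \<in> EM_sm"
  obtains a where "a \<in> EM_sm" "gabs (sm_class p) = sm_class a"
    "negligible (\<lambda>e. a e - norm (p e :: 'a))"
proof -
  define p' where "p' = (SOME f. f \<in> sm_class p)"
  have p': "p' \<in> EM_sm" "(\<lambda>e. p' e - p e) \<in> N_sm"
    using some_in_sm_class[OF p] unfolding p'_def by auto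
  define E where "E = (\<lambda>e::real. exp (- 1 / e))"
  have E: "0 < E e" for e unfolding E_def by simp
  define a where "a = (\<lambda>e. sqrt ((norm (p' e))\<^sup>2 + E e * E e))"
  have close: "\<bar>a e - norm (p' e)\<bar> \<le> E e" for e
    using sqrt_sum_squares_bounds[of "norm (p' e)" "E e"] E[of e]
    unfolding a_def by (simp add: power2_eq_square)
  have "smooth_net a" unfolding a_def
    using p' E smooth_net_exp_neg_inverse unfolding E_def EM_sm_def
    by (intro smooth_net_sqrt smooth_net_add smooth_net_mult norm_sq)
      (auto intro: add_nonneg_pos)
  moreover have "moderate a"
  proof (rule moderate_dominated[where K=1])
    show "moderate (\<lambda>e. norm (p' e) + E e)" using p' negligible_exp_neg_inverse unfolding E_def
      by (auto simp: EM_sm_def intro: moderate_add moderate_norm negligible_imp_moderate)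
    have "norm (a e) \<le> 1 * norm (norm (p' e) + E e)" for e
    proof -
      have "norm (a e) = a e" unfolding a_def by simp
      also have "\<dots> \<le> norm (p' e) + E e" using close[of e] by simp
      finally show ?thesis using E[of e] by simp
    qed
    then show "\<forall>\<^sub>F e in at_right 0. norm (a e) \<le> 1 * norm (norm (p' e) + E e)"
      by (intro always_eventually) blast
  qed
  ultimately have a: "a \<in> EM_sm" by (simp add: EM_sm_def)
  have a_p': "negligible (\<lambda>e. a e - norm (p' e))" "negligible (\<lambda>e. norm (p' e) - a e)"
    using close E
    by (auto intro!: negligible_dominated[where K=1, OF negligible_exp_neg_inverse] always_eventually
        simp: E_def abs_minus_commute)
  have cont: "continuous_on Iset (\<lambda>e. norm (p' e) - a e)"
    using smooth_net_continuous_on[OF \<open>smooth_net a\<close>] smooth_net_continuous_on[of p'] p'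
    by (auto simp: EM_sm_def intro!: continuous_on_diff continuous_on_norm)
  have "gabs (sm_class p) = sm_class a"
    unfolding gabs_def p'_def[symmetric] by (rule inv_tau_sm_co_class[OF a cont a_p'(2)])
  moreover have "negligible (\<lambda>e. a e - norm (p e))"
  proof -
    have "negligible (\<lambda>e. norm (p' e) - norm (p e))"
      using p'(2) unfolding N_sm_def
      by (auto intro!: negligible_dominated[where K=1, of "\<lambda>e. p' e - p e"] always_eventually
        norm_triangle_ineq3)
    then have "negligible (\<lambda>e. (a e - norm (p' e)) + (norm (p' e) - norm (p e)))"
      by (rule negligible_add[OF a_p'(1)])
    then show ?thesis by simp
  qed
  ultimately show ?thesis using that a by blast
qed

lemma gwedge_sm_class:
  assumes a: "a \<in> EM_sm" and b: "b \<in> EM_sm"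
  obtains w where "w \<in> EM_sm" "gwedge (sm_class a) (sm_class b) = sm_class w"
    "negligible (\<lambda>e. w e - min (a e) (b e))"
proof -
  define a' where "a' = (SOME f. f \<in> sm_class a)"
  define b' where "b' = (SOME f. f \<in> sm_class b)"
  have a': "a' \<in> EM_sm" "(\<lambda>e. a' e - a e) \<in> N_sm" using some_in_sm_class[OF a] unfolding a'_def by auto
  have b': "b' \<in> EM_sm" "(\<lambda>e. b' e - b e) \<in> N_sm" using some_in_sm_class[OF b] unfolding b'_def by auto
  define E where "E = (\<lambda>e::real. exp (- 1 / e))"
  have E: "0 < E e" for e unfolding E_def by simp
  define w where "w = (\<lambda>e. (1/2) * ((a' e + b' e) - sqrt ((a' e - b' e) * (a' e - b' e) + E e * E e)))"
  have close: "\<bar>w e - min (a' e) (b' e)\<bar> \<le> E e" and bounded: "\<bar>w e\<bar> \<le> \<bar>a' e\<bar> + \<bar>b' e\<bar> + E e" for e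
    unfolding w_def using smooth_min_bounds[OF E[of e], of "a' e" "b' e"] by auto
  have smooth: "smooth_net w"
  proof -
    have d: "smooth_net (\<lambda>e. a' e - b' e)" using a' b' by (simp add: EM_sm_def smooth_net_diff)
    have "smooth_net (\<lambda>e. sqrt ((a' e - b' e) * (a' e - b' e) + E e * E e))"
      using E smooth_net_exp_neg_inverse unfolding E_def
      by (intro smooth_net_sqrt smooth_net_add smooth_net_mult d) (auto intro: add_nonneg_pos)
    then show ?thesis unfolding w_def using a' b'
      by (intro smooth_net_mult smooth_net_const smooth_net_diff smooth_net_add) (auto simp: EM_sm_def)
  qed
  moreover have "moderate w"
  proof (rule moderate_dominated[where K=1])
    have "moderate (\<lambda>e. \<bar>a' e\<bar>)" "moderate (\<lambda>e. \<bar>b' e\<bar>)"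
      using a' b' moderate_norm[of a'] moderate_norm[of b'] by (simp_all add: EM_sm_def)
    then show "moderate (\<lambda>e. \<bar>a' e\<bar> + \<bar>b' e\<bar> + E e)"
      unfolding E_def by (intro moderate_add negligible_imp_moderate[OF negligible_exp_neg_inverse])
    show "\<forall>\<^sub>F e in at_right 0. norm (w e) \<le> 1 * norm (\<bar>a' e\<bar> + \<bar>b' e\<bar> + E e)"
      using bounded E by (intro always_eventually) (auto intro: order_trans[OF _ abs_ge_self])
  qed
  ultimately have w: "w \<in> EM_sm" by (simp add: EM_sm_def)
  have w_min: "negligible (\<lambda>e. w e - min (a' e) (b' e))" "negligible (\<lambda>e. min (a' e) (b' e) - w e)"
    using close E
    by (auto intro!: negligible_dominated[where K=1, OF negligible_exp_neg_inverse] always_eventually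
        simp: E_def abs_minus_commute)
  have cont: "continuous_on Iset (\<lambda>e. min (a' e) (b' e) - w e)"
    using smooth_net_continuous_on[OF smooth] smooth_net_continuous_on[of a']
      smooth_net_continuous_on[of b'] a' b'
    by (auto simp: EM_sm_def intro!: continuous_on_diff continuous_on_min)
  have "gwedge (sm_class a) (sm_class b) = sm_class w"
    unfolding gwedge_def a'_def[symmetric] b'_def[symmetric]
    by (rule inv_tau_sm_co_class[OF w cont w_min(2)])
  moreover have "negligible (\<lambda>e. w e - min (a e) (b e))"
  proof -
    have "negligible (\<lambda>e. \<bar>a' e - a e\<bar> + \<bar>b' e - b e\<bar>)"
      using a'(2) b'(2) by (auto simp: N_sm_def intro!: negligible_add negligible_abs)
    then have "negligible (\<lambda>e. min (a' e) (b' e) - min (a e) (b e))"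
      by (rule negligible_dominated[where K=1]) (auto intro!: always_eventually
        order_trans[OF abs_min_diff_le])
    then have "negligible (\<lambda>e. (w e - min (a' e) (b' e)) + (min (a' e) (b' e) - min (a e) (b e)))"
      by (rule negligible_add[OF w_min(1)])
    then show ?thesis by simp
  qed
  ultimately show ?thesis using that w by blast
qed

lemma gwedge_gabs_eq_zero_iff:
  fixes p q :: "real \<Rightarrow> 'a::real_normed_field"
  assumes norm_sq: "\<And>f::real \<Rightarrow> 'a. smooth_net f \<Longrightarrow> smooth_net (\<lambda>e. (norm (f e))\<^sup>2)"
    and p: "p \<in> EM_sm" and q: "q \<in> EM_sm"
  shows "gwedge (gabs (sm_class p)) (gabs (sm_class q)) = \<zero>\<^bsub>(Ksm :: (real \<Rightarrow> real) set ring)\<^esub>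
    \<longleftrightarrow> negligible (\<lambda>e. min (norm (p e)) (norm (q e)))"
proof -
  obtain a where a: "a \<in> EM_sm" "gabs (sm_class p) = sm_class a" "negligible (\<lambda>e. a e - norm (p e))"
    using gabs_sm_class[OF norm_sq p] by blast
  obtain b where b: "b \<in> EM_sm" "gabs (sm_class q) = sm_class b" "negligible (\<lambda>e. b e - norm (q e))"
    using gabs_sm_class[OF norm_sq q] by blast
  obtain w where w: "w \<in> EM_sm" "gwedge (sm_class a) (sm_class b) = sm_class w"
    "negligible (\<lambda>e. w e - min (a e) (b e))"
    using gwedge_sm_class[OF a(1) b(1)] by blast
  have "gwedge (gabs (sm_class p)) (gabs (sm_class q)) = \<zero>\<^bsub>Ksm\<^esub> \<longleftrightarrow> negligible w"
    unfolding a(2) b(2) w(2) by (rule sm_class_eq_zero_iff[OF w(1)])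
  also have "\<dots> \<longleftrightarrow> negligible (\<lambda>e. min (a e) (b e))" by (rule negligible_cong_diff[OF w(3)])
  also have "\<dots> \<longleftrightarrow> negligible (\<lambda>e. min (norm (p e)) (norm (q e)))"
  proof (rule negligible_cong_diff)
    have "negligible (\<lambda>e. \<bar>a e - norm (p e)\<bar> + \<bar>b e - norm (q e)\<bar>)"
      using a(3) b(3) by (intro negligible_add negligible_abs)
    then show "negligible (\<lambda>e. min (a e) (b e) - min (norm (p e)) (norm (q e)))"
      by (rule negligible_dominated[where K=1]) (auto intro!: always_eventually
        order_trans[OF abs_min_diff_le])
  qed
  finally show ?thesis .
qed

section \<open>Zero divisors\<close>

lemma min_le_sqrt_mult: "0 \<le> x \<Longrightarrow> 0 \<le> y \<Longrightarrow> min x y \<le> sqrt (x * (y::real))"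
proof -
  assume xy: "0 \<le> x" "0 \<le> y"
  have "min x y = sqrt (min x y * min x y)" using xy by simp
  also have "\<dots> \<le> sqrt (x * y)" using xy by (intro real_sqrt_le_mono mult_mono) auto
  finally show ?thesis .
qed

lemma mult_le_min_mult_add: "0 \<le> x \<Longrightarrow> 0 \<le> y \<Longrightarrow> x * y \<le> min x y * (x + (y::real))"
  by (cases "x \<le> y") (auto simp: min_def algebra_simps intro: mult_left_mono mult_right_mono)

lemma negligible_mult_iff_min:
  fixes p q :: "real \<Rightarrow> 'a::real_normed_field"
  assumes p: "moderate p" and q: "moderate q"
  shows "negligible (\<lambda>e. p e * q e) \<longleftrightarrow> negligible (\<lambda>e. min (norm (p e)) (norm (q e)))"
proof
  assume "negligible (\<lambda>e. p e * q e)"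
  then have n: "negligible (\<lambda>e. sqrt \<bar>norm (p e * q e)\<bar>)" by (intro negligible_sqrt_abs negligible_norm)
  have "norm (min (norm (p e)) (norm (q e))) \<le> 1 * norm (sqrt \<bar>norm (p e * q e)\<bar>)" for e
    using min_le_sqrt_mult[of "norm (p e)" "norm (q e)"] by (simp add: norm_mult)
  then show "negligible (\<lambda>e. min (norm (p e)) (norm (q e)))"
    by (intro negligible_dominated[where K=1, OF n] always_eventually) blast
next
  assume min: "negligible (\<lambda>e. min (norm (p e)) (norm (q e)))"
  have "moderate (\<lambda>e. norm (p e) + norm (q e))" by (intro moderate_add moderate_norm p q)
  then have n: "negligible (\<lambda>e. (norm (p e) + norm (q e)) * min (norm (p e)) (norm (q e)))"
    by (rule negligible_mult_moderate[OF min])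
  have "norm (p e * q e) \<le> 1 * norm ((norm (p e) + norm (q e)) * min (norm (p e)) (norm (q e)))"
    for e using mult_le_min_mult_add[of "norm (p e)" "norm (q e)"] by (simp add: norm_mult mult.commute)
  then show "negligible (\<lambda>e. p e * q e)"
    by (intro negligible_dominated[where K=1, OF n] always_eventually) blast
qed

lemma mult_square_le_of_mult_le_square:
  fixes a b s :: real
  assumes "0 \<le> a" "0 \<le> b" "0 < s" "a * b \<le> s\<^sup>2"
  shows "a * b\<^sup>2 \<le> s * (a\<^sup>2 + b\<^sup>2 + s\<^sup>2)"
proof -
  have "a * b\<^sup>2 = (a * b) * b" by (simp add: power2_eq_square)
  also have "\<dots> \<le> s\<^sup>2 * b" using assms by (intro mult_right_mono) auto
  also have "\<dots> \<le> s * (b\<^sup>2 + s\<^sup>2)"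
  proof -
    have "2 * s * b \<le> b\<^sup>2 + s\<^sup>2" using sum_squares_bound[of s b] by (simp add: mult.commute)
    moreover have "0 \<le> s * b" using assms by simp
    ultimately have "s * b \<le> b\<^sup>2 + s\<^sup>2" by linarith
    then have "s * (s * b) \<le> s * (b\<^sup>2 + s\<^sup>2)" using assms by (intro mult_left_mono) auto
    then show ?thesis by (simp add: power2_eq_square mult.assoc)
  qed
  also have "\<dots> \<le> s * (a\<^sup>2 + b\<^sup>2 + s\<^sup>2)" using assms by (intro mult_left_mono) auto
  finally show ?thesis .
qed

lemma partition_of_unity_bounds:
  fixes P Q s :: real
  assumes P: "0 \<le> P" and Q: "0 \<le> Q" and s: "0 < s" and PQ: "P * Q \<le> s\<^sup>2"
  shows "P * (Q\<^sup>2 / (P\<^sup>2 + Q\<^sup>2 + s\<^sup>2)) \<le> s"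
    and "Q * ((P\<^sup>2 + s\<^sup>2) / (P\<^sup>2 + Q\<^sup>2 + s\<^sup>2)) \<le> 2 * s"
proof -
  have D: "0 < P\<^sup>2 + Q\<^sup>2 + s\<^sup>2" using s by (simp add: add_nonneg_pos)
  have "P * Q\<^sup>2 \<le> s * (P\<^sup>2 + Q\<^sup>2 + s\<^sup>2)" by (rule mult_square_le_of_mult_le_square[OF P Q s PQ])
  then show "P * (Q\<^sup>2 / (P\<^sup>2 + Q\<^sup>2 + s\<^sup>2)) \<le> s" using D by (simp add: pos_divide_le_eq)
  have "Q * P\<^sup>2 \<le> s * (Q\<^sup>2 + P\<^sup>2 + s\<^sup>2)"
    using mult_square_le_of_mult_le_square[OF Q P s] PQ by (simp add: mult.commute)
  moreover have "Q * s\<^sup>2 \<le> s * (P\<^sup>2 + Q\<^sup>2 + s\<^sup>2)"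
  proof -
    have "Q * s \<le> P\<^sup>2 + Q\<^sup>2 + s\<^sup>2"
      using sum_squares_bound[of Q s] Q s zero_le_power2[of P] mult_nonneg_nonneg[of Q s] by linarith
    then have "s * (Q * s) \<le> s * (P\<^sup>2 + Q\<^sup>2 + s\<^sup>2)" using s by (intro mult_left_mono) auto
    then show ?thesis by (simp add: power2_eq_square mult.commute mult.left_commute)
  qed
  ultimately have "Q * (P\<^sup>2 + s\<^sup>2) \<le> 2 * s * (P\<^sup>2 + Q\<^sup>2 + s\<^sup>2)"
    by (simp add: distrib_left algebra_simps)
  then show "Q * ((P\<^sup>2 + s\<^sup>2) / (P\<^sup>2 + Q\<^sup>2 + s\<^sup>2)) \<le> 2 * s" using D by (simp add: pos_divide_le_eq)
qed

lemma negligible_mult_partition: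
  fixes p q :: "real \<Rightarrow> 'a::real_normed_field"
  assumes norm_sq: "\<And>f::real \<Rightarrow> 'a. smooth_net f \<Longrightarrow> smooth_net (\<lambda>e. (norm (f e))\<^sup>2)"
    and p: "p \<in> EM_sm" and q: "q \<in> EM_sm" and pq: "negligible (\<lambda>e. p e * q e)"
  obtains x :: "real \<Rightarrow> real" where "smooth_net x" "\<And>e. 0 \<le> x e \<and> x e \<le> 1"
    "negligible (\<lambda>e. p e * of_real (x e))" "negligible (\<lambda>e. q e * (1 - of_real (x e)))"
proof -
  define E where "E = (\<lambda>e::real. exp (- 1 / e))"
  have E: "0 < E e" for e unfolding E_def by simp
  define P where "P e = norm (p e)" for e
  define Q where "Q e = norm (q e)" for e
  define d where "d e = sqrt ((P e)\<^sup>2 * (Q e)\<^sup>2 + E e * E e)" for e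
  define x where "x e = (Q e)\<^sup>2 * inverse ((P e)\<^sup>2 + (Q e)\<^sup>2 + d e)" for e
  have PQ: "0 \<le> P e" "0 \<le> Q e" for e unfolding P_def Q_def by simp_all
  have d: "0 < d e" for e unfolding d_def using E[of e] by (simp add: add_nonneg_pos)
  have D: "0 < (P e)\<^sup>2 + (Q e)\<^sup>2 + d e" for e using d[of e] by (simp add: add_nonneg_pos)
  have smooth_sq: "smooth_net (\<lambda>e. (P e)\<^sup>2)" "smooth_net (\<lambda>e. (Q e)\<^sup>2)"
    using p q norm_sq unfolding P_def Q_def by (auto simp: EM_sm_def)
  have "smooth_net d" unfolding d_def using E smooth_net_exp_neg_inverse unfolding E_def
    by (intro smooth_net_sqrt smooth_net_add smooth_net_mult smooth_sq) (auto intro: add_nonneg_pos)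
  then have "smooth_net x" unfolding x_def using D
    by (intro smooth_net_mult smooth_net_inverse smooth_net_add smooth_sq) (auto simp: less_imp_neq[symmetric])
  define s where "s e = sqrt (d e)" for e
  have s: "0 < s e" "(s e)\<^sup>2 = d e" for e unfolding s_def using d[of e] by simp_all
  have PQ_le: "P e * Q e \<le> (s e)\<^sup>2" for e
  proof -
    have "P e * Q e = sqrt ((P e)\<^sup>2 * (Q e)\<^sup>2)" using PQ[of e] by (simp add: real_sqrt_mult)
    also have "\<dots> \<le> d e" unfolding d_def by (intro real_sqrt_le_mono) simp
    finally show ?thesis by (simp add: s)
  qed
  have x_eq: "x e = (Q e)\<^sup>2 / ((P e)\<^sup>2 + (Q e)\<^sup>2 + (s e)\<^sup>2)" for e
    unfolding x_def s(2) by (simp add: divide_inverse)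
  have one_minus_x_eq: "1 - x e = ((P e)\<^sup>2 + (s e)\<^sup>2) / ((P e)\<^sup>2 + (Q e)\<^sup>2 + (s e)\<^sup>2)" for e
    using D[of e] unfolding x_eq s(2) by (simp add: field_simps)
  have x01: "0 \<le> x e \<and> x e \<le> 1" for e
    unfolding x_eq s(2) using D[of e] d[of e] PQ[of e] by (auto simp: divide_le_eq_1_pos)
  have bounds: "norm (p e * of_real (x e)) \<le> 1 * norm (s e)"
    "norm (q e * (1 - of_real (x e))) \<le> 2 * norm (s e)" for e
  proof -
    have "norm (p e * of_real (x e)) = P e * x e" using x01[of e] by (simp add: P_def norm_mult)
    also have "\<dots> \<le> s e" unfolding x_eq by (rule partition_of_unity_bounds(1)[OF PQ s(1) PQ_le])
    finally show "norm (p e * of_real (x e)) \<le> 1 * norm (s e)" using s(1)[of e] by simp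
    have "q e * (1 - of_real (x e)) = q e * of_real (1 - x e)" by simp
    then have "norm (q e * (1 - of_real (x e))) = Q e * (1 - x e)"
      using x01[of e] by (simp only: Q_def norm_mult norm_of_real) simp
    also have "\<dots> \<le> 2 * s e" unfolding one_minus_x_eq
      by (rule partition_of_unity_bounds(2)[OF PQ s(1) PQ_le])
    finally show "norm (q e * (1 - of_real (x e))) \<le> 2 * norm (s e)" using s(1)[of e] by simp
  qed
  have "negligible d"
  proof (rule negligible_dominated[where K=1])
    show "negligible (\<lambda>e. norm (p e * q e) + E e)"
      using negligible_exp_neg_inverse unfolding E_def by (intro negligible_add negligible_norm pq)
    have "d e \<le> P e * Q e + E e" for e
      using sqrt_sum_squares_bounds(2)[of "P e * Q e" "E e"] PQ[of e] E[of e]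
      unfolding d_def by (simp add: power_mult_distrib power2_eq_square mult_ac)
    then show "\<forall>\<^sub>F e in at_right 0. norm (d e) \<le> 1 * norm (norm (p e * q e) + E e)"
      using d E by (intro always_eventually) (simp add: P_def Q_def norm_mult less_imp_le)
  qed
  then have "negligible s" unfolding s_def using negligible_sqrt_abs[of d] d by (simp add: less_imp_le)
  then have "negligible (\<lambda>e. p e * of_real (x e))" "negligible (\<lambda>e. q e * (1 - of_real (x e)))"
    using bounds by (intro negligible_dominated[OF \<open>negligible s\<close>] always_eventually allI; blast)+
  then show ?thesis using that \<open>smooth_net x\<close> x01 by blast
qed

context cring
begin

lemma Ann_set_add_eq_carrier_iff:
  assumes r: "r \<in> carrier R" and s: "s \<in> carrier R"
  shows "Ann R r <+> Ann R s = carrier R \<longleftrightarrow> (\<exists>x\<in>carrier R. r \<otimes> x = \<zero> \<and> s \<otimes> (\<one> \<ominus> x) = \<zero>)"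
proof
  assume "Ann R r <+> Ann R s = carrier R"
  then have "\<one> \<in> Ann R r <+> Ann R s" by simp
  then obtain u v where uv: "u \<in> Ann R r" "v \<in> Ann R s" "\<one> = u \<oplus> v"
    unfolding set_add_def' by auto
  then have "u \<in> carrier R" "v \<in> carrier R" by (auto simp: Ann_def)
  moreover from this have "\<one> \<ominus> u = v" using uv(3) by algebra
  ultimately show "\<exists>x\<in>carrier R. r \<otimes> x = \<zero> \<and> s \<otimes> (\<one> \<ominus> x) = \<zero>"
    using uv by (auto simp: Ann_def)
next
  assume "\<exists>x\<in>carrier R. r \<otimes> x = \<zero> \<and> s \<otimes> (\<one> \<ominus> x) = \<zero>"
  then obtain x where x: "x \<in> carrier R" "r \<otimes> x = \<zero>" "s \<otimes> (\<one> \<ominus> x) = \<zero>" by blast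
  show "Ann R r <+> Ann R s = carrier R"
  proof
    show "Ann R r <+> Ann R s \<subseteq> carrier R" unfolding set_add_def' by (auto simp: Ann_def)
    show "carrier R \<subseteq> Ann R r <+> Ann R s"
    proof
      fix t assume t: "t \<in> carrier R"
      have "r \<otimes> (t \<otimes> x) = t \<otimes> (r \<otimes> x)" "s \<otimes> (t \<otimes> (\<one> \<ominus> x)) = t \<otimes> (s \<otimes> (\<one> \<ominus> x))"
        and split: "t = t \<otimes> x \<oplus> t \<otimes> (\<one> \<ominus> x)"
        using r s t x(1) by algebra+
      then have "t \<otimes> x \<in> Ann R r" "t \<otimes> (\<one> \<ominus> x) \<in> Ann R s" using x t by (simp_all add: Ann_def)
      with split show "t \<in> Ann R r <+> Ann R s" unfolding set_add_def' by blast
    qed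
  qed
qed

lemma mult_eq_zero_if_annihilator_partition:
  assumes "r \<in> carrier R" "s \<in> carrier R" "x \<in> carrier R" "r \<otimes> x = \<zero>" "s \<otimes> (\<one> \<ominus> x) = \<zero>"
  shows "r \<otimes> s = \<zero>"
proof -
  have "r \<otimes> s = s \<otimes> (r \<otimes> x) \<oplus> r \<otimes> (s \<otimes> (\<one> \<ominus> x))" using assms(1-3) by algebra
  then show ?thesis using assms by simp
qed

end

lemma Ksm_mult_eq_zero_iff:
  fixes p q :: "real \<Rightarrow> 'a::real_normed_field"
  assumes "p \<in> EM_sm" "q \<in> EM_sm"
  shows "sm_class p \<otimes>\<^bsub>Ksm\<^esub> sm_class q = \<zero>\<^bsub>Ksm\<^esub> \<longleftrightarrow> negligible (\<lambda>e. p e * q e)"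
  using sm_class_eq_zero_iff[OF net_algebra.mult_closed[OF net_algebra_EM_sm assms]]
  by (simp add: sm_class_mult[OF assms])

lemma Ksm_annihilator_partition:
  fixes p q :: "real \<Rightarrow> 'a::real_normed_field"
  assumes norm_sq: "\<And>f::real \<Rightarrow> 'a. smooth_net f \<Longrightarrow> smooth_net (\<lambda>e. (norm (f e))\<^sup>2)"
    and p: "p \<in> EM_sm" and q: "q \<in> EM_sm" and pq: "negligible (\<lambda>e. p e * q e)"
  shows "\<exists>x\<in>carrier Ksm. sm_class p \<otimes>\<^bsub>Ksm\<^esub> x = \<zero>\<^bsub>Ksm\<^esub> \<and>
    sm_class q \<otimes>\<^bsub>Ksm\<^esub> (\<one>\<^bsub>Ksm\<^esub> \<ominus>\<^bsub>Ksm\<^esub> x) = \<zero>\<^bsub>Ksm\<^esub>"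
proof -
  obtain x :: "real \<Rightarrow> real" where x: "smooth_net x" "\<And>e. 0 \<le> x e \<and> x e \<le> 1"
    "negligible (\<lambda>e. p e * of_real (x e))" "negligible (\<lambda>e. q e * (1 - of_real (x e)))"
    using negligible_mult_partition[OF norm_sq p q pq] by blast
  define y :: "real \<Rightarrow> 'a" where "y e = of_real (x e)" for e
  have "smooth_net y" unfolding y_def by (rule smooth_net_bounded_linear[OF bounded_linear_of_real x(1)])
  moreover have "moderate y"
    by (rule moderate_dominated[where K=1, OF moderate_const[of "1::real"]])
      (use x(2) in \<open>auto intro!: always_eventually simp: y_def\<close>)
  ultimately have y: "y \<in> EM_sm" by (simp add: EM_sm_def)
  have one_minus_y: "(\<lambda>e. 1 - y e) \<in> EM_sm"
    using moderate_add[OF moderate_const moderate_uminus[OF \<open>moderate y\<close>], of 1]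
      smooth_net_diff[OF smooth_net_const \<open>smooth_net y\<close>, of 1]
    by (simp add: EM_sm_def)
  have "sm_class p \<otimes>\<^bsub>Ksm\<^esub> sm_class y = \<zero>\<^bsub>Ksm\<^esub>"
    using x(3) Ksm_mult_eq_zero_iff[OF p y] by (simp add: y_def)
  moreover have "sm_class q \<otimes>\<^bsub>Ksm\<^esub> (\<one>\<^bsub>Ksm\<^esub> \<ominus>\<^bsub>Ksm\<^esub> sm_class y) = \<zero>\<^bsub>Ksm\<^esub>"
    using x(4) Ksm_mult_eq_zero_iff[OF q one_minus_y] by (simp add: one_minus_sm_class[OF y] y_def)
  ultimately show ?thesis using y carrier_Ksm by blast
qed

lemma Ksm_zero_divisor_iff:
  fixes r s :: "(real \<Rightarrow> 'a::real_normed_field) set"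
  assumes norm_sq: "\<And>f::real \<Rightarrow> 'a. smooth_net f \<Longrightarrow> smooth_net (\<lambda>e. (norm (f e))\<^sup>2)"
    and r: "r \<in> carrier Ksm" and s: "s \<in> carrier Ksm"
  shows "(r \<otimes>\<^bsub>Ksm\<^esub> s = \<zero>\<^bsub>Ksm\<^esub> \<longleftrightarrow>
      (\<exists>x\<in>carrier Ksm. r \<otimes>\<^bsub>Ksm\<^esub> x = \<zero>\<^bsub>Ksm\<^esub> \<and> s \<otimes>\<^bsub>Ksm\<^esub> (\<one>\<^bsub>Ksm\<^esub> \<ominus>\<^bsub>Ksm\<^esub> x) = \<zero>\<^bsub>Ksm\<^esub>)) \<and>
    (r \<otimes>\<^bsub>Ksm\<^esub> s = \<zero>\<^bsub>Ksm\<^esub> \<longleftrightarrow> Ann Ksm r <+>\<^bsub>Ksm\<^esub> Ann Ksm s = carrier Ksm) \<and>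
    (r \<otimes>\<^bsub>Ksm\<^esub> s = \<zero>\<^bsub>Ksm\<^esub> \<longleftrightarrow> gwedge (gabs r) (gabs s) = \<zero>\<^bsub>(Ksm :: (real \<Rightarrow> real) set ring)\<^esub>)"
proof -
  interpret K: cring "Ksm :: (real \<Rightarrow> 'a) set ring" by (rule cring_Ksm)
  obtain p where p: "p \<in> EM_sm" "r = sm_class p" using r carrier_Ksm by blast
  obtain q where q: "q \<in> EM_sm" "s = sm_class q" using s carrier_Ksm by blast
  have zero_iff: "r \<otimes>\<^bsub>Ksm\<^esub> s = \<zero>\<^bsub>Ksm\<^esub> \<longleftrightarrow> negligible (\<lambda>e. p e * q e)"
    unfolding p(2) q(2) by (rule Ksm_mult_eq_zero_iff[OF p(1) q(1)])
  have "r \<otimes>\<^bsub>Ksm\<^esub> s = \<zero>\<^bsub>Ksm\<^esub> \<longleftrightarrow>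
      (\<exists>x\<in>carrier Ksm. r \<otimes>\<^bsub>Ksm\<^esub> x = \<zero>\<^bsub>Ksm\<^esub> \<and> s \<otimes>\<^bsub>Ksm\<^esub> (\<one>\<^bsub>Ksm\<^esub> \<ominus>\<^bsub>Ksm\<^esub> x) = \<zero>\<^bsub>Ksm\<^esub>)"
    using zero_iff Ksm_annihilator_partition[OF norm_sq p(1) q(1)] p(2) q(2)
      K.mult_eq_zero_if_annihilator_partition[OF r s] by blast
  moreover have "r \<otimes>\<^bsub>Ksm\<^esub> s = \<zero>\<^bsub>Ksm\<^esub> \<longleftrightarrow> gwedge (gabs r) (gabs s) = \<zero>\<^bsub>(Ksm :: (real \<Rightarrow> real) set ring)\<^esub>"
    using zero_iff gwedge_gabs_eq_zero_iff[OF norm_sq p(1) q(1)] negligible_mult_iff_min[of p q] p q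
    by (simp add: EM_sm_def)
  ultimately show ?thesis using K.Ann_set_add_eq_carrier_iff[OF r s] by blast
qed

theorem theorem4p19:
  shows "(\<forall>r \<in> carrier (Ksm :: (real \<Rightarrow> real) set ring). \<forall>s \<in> carrier (Ksm :: (real \<Rightarrow> real) set ring).
     let K = (Ksm :: (real \<Rightarrow> real) set ring) in
     ((r \<otimes>\<^bsub>K\<^esub> s = \<zero>\<^bsub>K\<^esub>)
        \<longleftrightarrow> (\<exists>x \<in> carrier K. r \<otimes>\<^bsub>K\<^esub> x = \<zero>\<^bsub>K\<^esub> \<and> s \<otimes>\<^bsub>K\<^esub> (\<one>\<^bsub>K\<^esub> \<ominus>\<^bsub>K\<^esub> x) = \<zero>\<^bsub>K\<^esub>)) \<and>
     ((r \<otimes>\<^bsub>K\<^esub> s = \<zero>\<^bsub>K\<^esub>) \<longleftrightarrow> (Ann K r <+>\<^bsub>K\<^esub> Ann K s = carrier K)) \<and>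
     ((r \<otimes>\<^bsub>K\<^esub> s = \<zero>\<^bsub>K\<^esub>) \<longleftrightarrow> (gwedge (gabs r) (gabs s) = \<zero>\<^bsub>(Ksm :: (real \<Rightarrow> real) set ring)\<^esub>)))
   \<and>
   (\<forall>r \<in> carrier (Ksm :: (real \<Rightarrow> complex) set ring). \<forall>s \<in> carrier (Ksm :: (real \<Rightarrow> complex) set ring).
     let K = (Ksm :: (real \<Rightarrow> complex) set ring) in
     ((r \<otimes>\<^bsub>K\<^esub> s = \<zero>\<^bsub>K\<^esub>)
        \<longleftrightarrow> (\<exists>x \<in> carrier K. r \<otimes>\<^bsub>K\<^esub> x = \<zero>\<^bsub>K\<^esub> \<and> s \<otimes>\<^bsub>K\<^esub> (\<one>\<^bsub>K\<^esub> \<ominus>\<^bsub>K\<^esub> x) = \<zero>\<^bsub>K\<^esub>)) \<and>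
     ((r \<otimes>\<^bsub>K\<^esub> s = \<zero>\<^bsub>K\<^esub>) \<longleftrightarrow> (Ann K r <+>\<^bsub>K\<^esub> Ann K s = carrier K)) \<and>
     ((r \<otimes>\<^bsub>K\<^esub> s = \<zero>\<^bsub>K\<^esub>) \<longleftrightarrow> (gwedge (gabs r) (gabs s) = \<zero>\<^bsub>(Ksm :: (real \<Rightarrow> real) set ring)\<^esub>)))"
  unfolding Let_def
  by (intro ballI Ksm_zero_divisor_iff[OF smooth_net_norm_sq_real]
      Ksm_zero_divisor_iff[OF smooth_net_norm_sq_complex] conjI)

end
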